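(* Let $N=(S,T,F,M_0,\ell)$ be a structural conflict net. If there are $\sigma\in\mathrm{Act}^*$ and $a,b,c\in\mathrm{Act}$ with $a\ne c$ such that $\langle\sigma,\{\{a,c\}\}\rangle\notin\mathcal F(N)$, $\langle\sigma,\{\{b\}\}\rangle\notin\mathcal F(N)$ and $\langle\sigma,\{\{a,b\},\{b,c\}\}\rangle\in\mathcal F(N)$, then $N$ has a fully reachable pure $\mathsf M$.
   Context: Fix visible actions $\mathrm{Act}$ and $\tau\notin\mathrm{Act}$. A Petri net has disjoint $S,T$, $F:(S\times T)\cup(T\times S)\to\mathbb N$, $M_0\in\mathbb N^S$, $\ell:T\to\mathrm{Act}\cup\{\tau\}$. ${}^\bullet x(y)=F(y,x)$, $x^\bullet(y)=F(x,y)$, extended additively; multiset $\le,\cap,\cup$ pointwise $\le$, min, max. For finite nonempty multiset $G$ of transitions, $M[G\rangle M'$ iff ${}^\bullet G\le M$ and $M'=M-{}^\bullet G+G^\bullet$; reachable markings as usual; $t\smile u$ iff $M[\{t\}+\{u\}\rangle$ for some reachable $M$. Structural conflict net: $t\smile u\Rightarrow{}^\bullet t\cap{}^\bullet u=\emptyset$. Fully reachable pure $\mathsf M$: $t,u,v\in T$ with ${}^\bullet t\cap{}^\bullet u\ne\emptyset$, ${}^\bullet u\cap{}^\bullet v\ne\emptyset$, ${}^\bullet t\cap{}^\bullet v=\emptyset$ and a reachable $M$ with ${}^\bullet t\cup{}^\bullet u\cup{}^\bullet v\le M$. $M\xrightarrow{\alpha}M'$ iff $M[t\rangle M'$ with $\ell(t)=\alpha$;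 $\Rightarrow$ reflexive transitive closure of $\xrightarrow{\tau}$; $M\overset{a_1\cdots a_n}{\Longrightarrow}M'$ iff $M\Rightarrow\xrightarrow{a_1}\Rightarrow\cdots\xrightarrow{a_n}\Rightarrow M'$. For a step $A$ (finite nonempty multiset over $\mathrm{Act}$), $M\xrightarrow{A}$ iff $M[G\rangle$ for a finite multiset $G$ of transitions, none labelled $\tau$, with label multiset $A$. $\mathcal F(N)$ consists of all $\langle\sigma,X\rangle$, $\sigma\in\mathrm{Act}^*$, $X$ a finite set of steps, such that some $M$ has $M_0\overset{\sigma}{\Longrightarrow}M$, $M\not\xrightarrow{\tau}$ and $M\not\xrightarrow{A}$ for all $A\in X$. *)

theory Defs
  imports Main "HOL-Library.Multiset"
begin

text \<open>Places have type 's, transitions type 't (so S and T are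
disjoint), visible actions type 'a; the label None plays the role of the invisible
action tau. The flow relation F is split into pre (place to transition) and
post (transition to place).\<close>

record ('s, 't, 'a) pnet =
  places :: "'s set"
  trans  :: "'t set"
  pre    :: "'s \<Rightarrow> 't \<Rightarrow> nat"
  post   :: "'t \<Rightarrow> 's \<Rightarrow> nat"
  init   :: "'s \<Rightarrow> nat"
  lab    :: "'t \<Rightarrow> 'a option"

definition petri_net :: "('s, 't, 'a) pnet \<Rightarrow> bool" where
  "petri_net N \<longleftrightarrow>
     (\<forall>s t. pre N s t \<noteq> 0 \<longrightarrow> s \<in> places N \<and> t \<in> trans N) \<and>
     (\<forall>t s. post N t s \<noteq> 0 \<longrightarrow> s \<in> places N \<and> t \<in> trans N) \<and>
     (\<forall>s. init N s \<noteq> 0 \<longrightarrow> s \<in> places N)"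

definition preset :: "('s, 't, 'a) pnet \<Rightarrow> 't \<Rightarrow> 's \<Rightarrow> nat" where
  "preset N t = (\<lambda>s. pre N s t)"

definition preset_ms :: "('s, 't, 'a) pnet \<Rightarrow> 't multiset \<Rightarrow> 's \<Rightarrow> nat" where
  "preset_ms N G = (\<lambda>s. \<Sum>\<^sub># (image_mset (\<lambda>t. pre N s t) G))"

definition postset_ms :: "('s, 't, 'a) pnet \<Rightarrow> 't multiset \<Rightarrow> 's \<Rightarrow> nat" where
  "postset_ms N G = (\<lambda>s. \<Sum>\<^sub># (image_mset (\<lambda>t. post N t s) G))"

definition fires :: "('s, 't, 'a) pnet \<Rightarrow> ('s \<Rightarrow> nat) \<Rightarrow> 't multiset \<Rightarrow> ('s \<Rightarrow> nat) \<Rightarrow> bool" where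
  "fires N M G M' \<longleftrightarrow> G \<noteq> {#} \<and> set_mset G \<subseteq> trans N \<and>
     preset_ms N G \<le> M \<and> M' = (\<lambda>s. M s - preset_ms N G s + postset_ms N G s)"

inductive reachable :: "('s, 't, 'a) pnet \<Rightarrow> ('s \<Rightarrow> nat) \<Rightarrow> bool" for N where
  init: "reachable N (init N)"
| step: "reachable N M \<Longrightarrow> fires N M {#t#} M' \<Longrightarrow> reachable N M'"

definition concurrent :: "('s, 't, 'a) pnet \<Rightarrow> 't \<Rightarrow> 't \<Rightarrow> bool" where
  "concurrent N t u \<longleftrightarrow> (\<exists>M M'. reachable N M \<and> fires N M ({#t#} + {#u#}) M')"

definition structural_conflict_net :: "('s, 't, 'a) pnet \<Rightarrow> bool" where
  "structural_conflict_net N \<longleftrightarrow> petri_net N \<and>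
     (\<forall>t u. concurrent N t u \<longrightarrow> inf (preset N t) (preset N u) = (\<lambda>_. 0))"

definition fully_reachable_pure_M :: "('s, 't, 'a) pnet \<Rightarrow> bool" where
  "fully_reachable_pure_M N \<longleftrightarrow>
     (\<exists>t\<in>trans N. \<exists>u\<in>trans N. \<exists>v\<in>trans N.
        inf (preset N t) (preset N u) \<noteq> (\<lambda>_. 0) \<and>
        inf (preset N u) (preset N v) \<noteq> (\<lambda>_. 0) \<and>
        inf (preset N t) (preset N v) = (\<lambda>_. 0) \<and>
        (\<exists>M. reachable N M \<and> sup (sup (preset N t) (preset N u)) (preset N v) \<le> M))"

definition ltrans :: "('s, 't, 'a) pnet \<Rightarrow> ('s \<Rightarrow> nat) \<Rightarrow> 'a option \<Rightarrow> ('s \<Rightarrow> nat) \<Rightarrow> bool" where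
  "ltrans N M \<alpha> M' \<longleftrightarrow> (\<exists>t. fires N M {#t#} M' \<and> lab N t = \<alpha>)"

definition tau_steps :: "('s, 't, 'a) pnet \<Rightarrow> ('s \<Rightarrow> nat) \<Rightarrow> ('s \<Rightarrow> nat) \<Rightarrow> bool" where
  "tau_steps N = (\<lambda>M M'. ltrans N M None M')\<^sup>*\<^sup>*"

fun weak :: "('s, 't, 'a) pnet \<Rightarrow> ('s \<Rightarrow> nat) \<Rightarrow> 'a list \<Rightarrow> ('s \<Rightarrow> nat) \<Rightarrow> bool" where
  "weak N M [] M' \<longleftrightarrow> tau_steps N M M'"
| "weak N M (a # \<sigma>) M' \<longleftrightarrow>
     (\<exists>M1 M2. tau_steps N M M1 \<and> ltrans N M1 (Some a) M2 \<and> weak N M2 \<sigma> M')"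

definition step_enabled :: "('s, 't, 'a) pnet \<Rightarrow> ('s \<Rightarrow> nat) \<Rightarrow> 'a multiset \<Rightarrow> bool" where
  "step_enabled N M A \<longleftrightarrow>
     (\<exists>G M'. fires N M G M' \<and> image_mset (lab N) G = image_mset Some A)"

definition failures :: "('s, 't, 'a) pnet \<Rightarrow> ('a list \<times> 'a multiset set) set" where
  "failures N = {(\<sigma>, X). finite X \<and> (\<forall>A\<in>X. A \<noteq> {#}) \<and>
     (\<exists>M. weak N (init N) \<sigma> M \<and> \<not> (\<exists>M'. ltrans N M None M') \<and>
          (\<forall>A\<in>X. \<not> step_enabled N M A))}"

end

theory Submission
  imports Defs
begin

text \<open>Take the stable marking M reached after \<sigma> that refuses both {a,b} and {b,c}.
Since {a,c} is not refused, M enables a step of two transitions t and v labelled a and c;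
they are then concurrent, so in a structural conflict net their presets are disjoint.
Since {b} is not refused, a transition u labelled b is enabled at M. If the presets of
t and u were disjoint, t and u could fire together at M, contradicting the refusal of {a,b};
symmetrically for u and v and the refusal of {b,c}. Thus t, u, v form an M, and all three
presets fit into the reachable marking M.\<close>

lemma reachable_tau_steps: "tau_steps N M M' \<Longrightarrow> reachable N M \<Longrightarrow> reachable N M'"
  unfolding tau_steps_def
  by (induction rule: rtranclp_induct) (auto simp: ltrans_def intro: reachable.step)

lemma reachable_weak: "weak N M \<sigma> M' \<Longrightarrow> reachable N M \<Longrightarrow> reachable N M'"
proof (induction \<sigma> arbitrary: M)
  case Nil
  then show ?case by (auto intro: reachable_tau_steps)
next
  case (Cons a \<sigma>)
  then obtain M1 M2 where "tau_steps N M M1" "ltrans N M1 (Some a) M2" "weak N M2 \<sigma> M'"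
    by auto
  with Cons.prems(2) have "reachable N M2"
    by (auto simp: ltrans_def intro: reachable.step reachable_tau_steps)
  with \<open>weak N M2 \<sigma> M'\<close> show ?case by (rule Cons.IH)
qed

lemma image_mset_eq_singletonD:
  assumes "image_mset f G = {#x#}"
  obtains t where "G = {#t#}" "f t = x"
  using assms by (auto dest!: msed_map_invR)

lemma image_mset_eq_pairD:
  assumes "image_mset f G = {#x, y#}"
  obtains t u where "G = {#t, u#}" "f t = x" "f u = y"
  using assms by (auto dest!: msed_map_invR)

lemma ex_fires_singleton_iff:
  "(\<exists>M'. fires N M {#t#} M') \<longleftrightarrow> t \<in> trans N \<and> preset N t \<le> M"
  by (auto simp: fires_def preset_ms_def preset_def le_fun_def)

lemma ex_fires_pair_iff:
  "(\<exists>M'. fires N M {#t, u#} M') \<longleftrightarrow>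
     t \<in> trans N \<and> u \<in> trans N \<and> (\<forall>s. pre N s t + pre N s u \<le> M s)"
  unfolding fires_def preset_ms_def le_fun_def by auto

lemma step_enabled_singleton_iff:
  "step_enabled N M {#b#} \<longleftrightarrow> (\<exists>u\<in>trans N. lab N u = Some b \<and> preset N u \<le> M)"
proof
  assume "step_enabled N M {#b#}"
  then obtain G M' where fires: "fires N M G M'" and labels: "image_mset (lab N) G = {#Some b#}"
    by (auto simp: step_enabled_def)
  from labels obtain u where "G = {#u#}" "lab N u = Some b"
    by (rule image_mset_eq_singletonD)
  moreover from fires \<open>G = {#u#}\<close> have "u \<in> trans N \<and> preset N u \<le> M"
    by (auto simp flip: ex_fires_singleton_iff)
  ultimately show "\<exists>u\<in>trans N. lab N u = Some b \<and> preset N u \<le> M"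
    by blast
next
  assume "\<exists>u\<in>trans N. lab N u = Some b \<and> preset N u \<le> M"
  then obtain u where u: "u \<in> trans N" "lab N u = Some b" "preset N u \<le> M"
    by blast
  then have "\<exists>M'. fires N M {#u#} M'"
    by (simp add: ex_fires_singleton_iff)
  then obtain M' where "fires N M {#u#} M'" ..
  with u show "step_enabled N M {#b#}"
    unfolding step_enabled_def by (intro exI[of _ "{#u#}"] exI[of _ M']) simp
qed

lemma step_enabled_pair_iff:
  "step_enabled N M {#a, b#} \<longleftrightarrow>
     (\<exists>t\<in>trans N. \<exists>u\<in>trans N. lab N t = Some a \<and> lab N u = Some b \<and>
        (\<forall>s. pre N s t + pre N s u \<le> M s))"
proof
  assume "step_enabled N M {#a, b#}"
  then obtain G M' where fires: "fires N M G M'" and labels: "image_mset (lab N) G = {#Some a, Some b#}"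
    by (auto simp: step_enabled_def)
  from labels obtain t u where "G = {#t, u#}" "lab N t = Some a" "lab N u = Some b"
    by (rule image_mset_eq_pairD)
  moreover from fires \<open>G = {#t, u#}\<close>
  have "t \<in> trans N \<and> u \<in> trans N \<and> (\<forall>s. pre N s t + pre N s u \<le> M s)"
    by (auto simp flip: ex_fires_pair_iff)
  ultimately show "\<exists>t\<in>trans N. \<exists>u\<in>trans N. lab N t = Some a \<and> lab N u = Some b \<and>
                     (\<forall>s. pre N s t + pre N s u \<le> M s)"
    by blast
next
  assume "\<exists>t\<in>trans N. \<exists>u\<in>trans N. lab N t = Some a \<and> lab N u = Some b \<and>
            (\<forall>s. pre N s t + pre N s u \<le> M s)"
  then obtain t u where tu: "t \<in> trans N" "u \<in> trans N" "lab N t = Some a" "lab N u = Some b"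
      "\<forall>s. pre N s t + pre N s u \<le> M s"
    by blast
  then have "\<exists>M'. fires N M {#t, u#} M'"
    by (simp add: ex_fires_pair_iff)
  then obtain M' where "fires N M {#t, u#} M'" ..
  with tu show "step_enabled N M {#a, b#}"
    unfolding step_enabled_def by (intro exI[of _ "{#t, u#}"] exI[of _ M']) simp
qed

lemma sum_pre_le_if_presets_disjoint:
  assumes "inf (preset N t) (preset N u) = (\<lambda>_. 0)" "preset N t \<le> M" "preset N u \<le> M"
  shows "pre N s t + pre N s u \<le> M s"
proof -
  have "min (pre N s t) (pre N s u) = 0"
    using fun_cong[OF assms(1), of s] by (simp add: preset_def inf_fun_def inf_nat_def)
  moreover have "pre N s t \<le> M s" "pre N s u \<le> M s"
    using assms(2,3) by (auto simp: preset_def le_fun_def)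
  ultimately show ?thesis by linarith
qed

lemma presets_overlap_if_pair_refused:
  assumes "\<not> step_enabled N M {#a, b#}"
    and "t \<in> trans N" "lab N t = Some a" "preset N t \<le> M"
    and "u \<in> trans N" "lab N u = Some b" "preset N u \<le> M"
  shows "inf (preset N t) (preset N u) \<noteq> (\<lambda>_. 0)"
proof
  assume "inf (preset N t) (preset N u) = (\<lambda>_. 0)"
  then have "\<forall>s. pre N s t + pre N s u \<le> M s"
    using sum_pre_le_if_presets_disjoint assms(4,7) by fast
  with assms(2,3,5,6) have "step_enabled N M {#a, b#}"
    unfolding step_enabled_pair_iff by blast
  with assms(1) show False ..
qed

lemma presets_disjoint_if_concurrent:
  assumes "structural_conflict_net N" "reachable N M"
    and "t \<in> trans N" "u \<in> trans N" "\<forall>s. pre N s t + pre N s u \<le> M s"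
  shows "inf (preset N t) (preset N u) = (\<lambda>_. 0)"
proof -
  have "\<exists>M'. fires N M {#t, u#} M'"
    using assms(3-5) by (simp add: ex_fires_pair_iff)
  then obtain M' where "fires N M {#t, u#} M'" ..
  with assms(2) have "concurrent N t u"
    by (auto simp: concurrent_def add_mset_commute)
  with assms(1) show ?thesis
    by (auto simp: structural_conflict_net_def)
qed

lemma failuresD:
  assumes "(\<sigma>, X) \<in> failures N"
  obtains M where "weak N (init N) \<sigma> M" "\<not> (\<exists>M'. ltrans N M None M')"
    "\<And>A. A \<in> X \<Longrightarrow> \<not> step_enabled N M A"
  using assms by (auto simp: failures_def)

lemma step_enabled_if_not_refused:
  assumes "(\<sigma>, {A}) \<notin> failures N" "A \<noteq> {#}"
    and "weak N (init N) \<sigma> M" "\<not> (\<exists>M'. ltrans N M None M')"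
  shows "step_enabled N M A"
  using assms by (auto simp: failures_def)

theorem lemma5p5:
  fixes N :: "('s, 't, 'a) pnet" and \<sigma> :: "'a list" and a b c :: 'a
  assumes "structural_conflict_net N"
    and "a \<noteq> c"
    and "(\<sigma>, {{#a, c#}}) \<notin> failures N"
    and "(\<sigma>, {{#b#}}) \<notin> failures N"
    and "(\<sigma>, {{#a, b#}, {#b, c#}}) \<in> failures N"
  shows "fully_reachable_pure_M N"
proof -
  obtain M where after: "weak N (init N) \<sigma> M" and stable: "\<not> (\<exists>M'. ltrans N M None M')"
    and no_ab: "\<not> step_enabled N M {#a, b#}" and no_bc: "\<not> step_enabled N M {#b, c#}"
    using assms(5) by (rule failuresD) auto
  have reach: "reachable N M"
    using after reachable.init by (rule reachable_weak)
  have "step_enabled N M {#a, c#}"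
    using assms(3) by (rule step_enabled_if_not_refused) (use after stable in auto)
  then obtain t v where t: "t \<in> trans N" "lab N t = Some a" and v: "v \<in> trans N" "lab N v = Some c"
    and tv_le: "\<forall>s. pre N s t + pre N s v \<le> M s"
    unfolding step_enabled_pair_iff by blast
  have "step_enabled N M {#b#}"
    using assms(4) by (rule step_enabled_if_not_refused) (use after stable in auto)
  then obtain u where u: "u \<in> trans N" "lab N u = Some b" "preset N u \<le> M"
    unfolding step_enabled_singleton_iff by blast
  have t_le: "preset N t \<le> M" and v_le: "preset N v \<le> M"
    using tv_le unfolding preset_def le_fun_def by (meson add_leD1 add_leD2)+
  have "inf (preset N t) (preset N v) = (\<lambda>_. 0)"
    using assms(1) reach t(1) v(1) tv_le by (rule presets_disjoint_if_concurrent)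
  moreover have "inf (preset N t) (preset N u) \<noteq> (\<lambda>_. 0)"
    using no_ab t t_le u by (rule presets_overlap_if_pair_refused)
  moreover have "inf (preset N u) (preset N v) \<noteq> (\<lambda>_. 0)"
    using no_bc u v v_le by (rule presets_overlap_if_pair_refused)
  moreover have "sup (sup (preset N t) (preset N u)) (preset N v) \<le> M"
    using t_le u(3) v_le by simp
  ultimately show ?thesis
    unfolding fully_reachable_pure_M_def using t(1) u(1) v(1) reach by blast
qed

end
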